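(* Let $x:M\to\mathbb{R}^3$ be a smooth immersed oriented surface with Gauss map $N$ whose mean curvature satisfies $2H=a(x_1^2+x_2^2)+b$ for constants $a,b\in\mathbb{R}$. Then both functions $N_3=\langle N,E_3\rangle$ and $\psi=\langle x\wedge N,E_3\rangle$ satisfy $$\Delta u+\big(|\sigma|^2-2a(h-x_3N_3)\big)u=0\quad\text{on }M.$$
   Context: $E_1,E_2,E_3$ is the standard basis of $\mathbb{R}^3$, $\wedge$ the cross product, $x_i=\langle x,E_i\rangle$. $\Delta$ is the Laplace–Beltrami operator of the induced metric, $\sigma$ the second fundamental form, $h=\langle N,x\rangle$ the support function, and the mean curvature $H$ is defined with respect to $N$ by $\Delta x=2HN$. *)

theory Defs
  imports "HOL-Analysis.Analysis"
begin

text \<open>Local setting: a surface patch x : U \<rightarrow> R^3, U an open subset of R^2 = real \<times> real,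
  coordinates (u,v).  All notions below are the standard coordinate expressions.\<close>

text \<open>Partial derivatives with respect to u (index False) and v (index True).\<close>
definition pd :: "bool \<Rightarrow> (real \<times> real \<Rightarrow> 'a::real_normed_vector) \<Rightarrow> real \<times> real \<Rightarrow> 'a" where
  "pd j f p = frechet_derivative f (at p) (if j then (0, 1) else (1, 0))"

fun ipd :: "bool list \<Rightarrow> (real \<times> real \<Rightarrow> 'a::real_normed_vector) \<Rightarrow> real \<times> real \<Rightarrow> 'a" where
  "ipd [] f = f"
| "ipd (j # js) f = pd j (ipd js f)"

definition smooth_on :: "(real \<times> real) set \<Rightarrow> (real \<times> real \<Rightarrow> 'a::real_normed_vector) \<Rightarrow> bool" where
  "smooth_on U f \<longleftrightarrow> (\<forall>js. ipd js f differentiable_on U)"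

definition E :: "3 \<Rightarrow> real^3" where
  "E i = axis i 1"

definition gmet :: "(real \<times> real \<Rightarrow> real^3) \<Rightarrow> bool \<Rightarrow> bool \<Rightarrow> real \<times> real \<Rightarrow> real" where
  "gmet x i j p = pd i x p \<bullet> pd j x p"

definition gdet :: "(real \<times> real \<Rightarrow> real^3) \<Rightarrow> real \<times> real \<Rightarrow> real" where
  "gdet x p = gmet x False False p * gmet x True True p - gmet x False True p * gmet x True False p"

definition ginv :: "(real \<times> real \<Rightarrow> real^3) \<Rightarrow> bool \<Rightarrow> bool \<Rightarrow> real \<times> real \<Rightarrow> real" where
  "ginv x i j p = (if i = j then gmet x (\<not> i) (\<not> j) p else - gmet x i j p) / gdet x p"

definition lapl :: "(real \<times> real \<Rightarrow> real^3) \<Rightarrow> (real \<times> real \<Rightarrow> real) \<Rightarrow> real \<times> real \<Rightarrow> real" where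
  "lapl x f p = (1 / sqrt (gdet x p)) *
     (\<Sum>i\<in>(UNIV::bool set). pd i (\<lambda>q. sqrt (gdet x q) *
        (\<Sum>j\<in>(UNIV::bool set). ginv x i j q * pd j f q)) p)"

definition lapl_vec :: "(real \<times> real \<Rightarrow> real^3) \<Rightarrow> (real \<times> real \<Rightarrow> real^3) \<Rightarrow> real \<times> real \<Rightarrow> real^3" where
  "lapl_vec x F p = (\<chi> k. lapl x (\<lambda>q. F q $ k) p)"

text \<open>Mean curvature with respect to N, defined by \<Delta>x = 2HN (the normal component of \<Delta>x / 2).\<close>
definition mean_curv :: "(real \<times> real \<Rightarrow> real^3) \<Rightarrow> (real \<times> real \<Rightarrow> real^3) \<Rightarrow> real \<times> real \<Rightarrow> real" where
  "mean_curv x N p = (lapl_vec x x p \<bullet> N p) / 2"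

definition sff :: "(real \<times> real \<Rightarrow> real^3) \<Rightarrow> (real \<times> real \<Rightarrow> real^3) \<Rightarrow> bool \<Rightarrow> bool \<Rightarrow> real \<times> real \<Rightarrow> real" where
  "sff x N i j p = pd i (pd j x) p \<bullet> N p"

definition sff_norm2 :: "(real \<times> real \<Rightarrow> real^3) \<Rightarrow> (real \<times> real \<Rightarrow> real^3) \<Rightarrow> real \<times> real \<Rightarrow> real" where
  "sff_norm2 x N p = (\<Sum>i\<in>UNIV. \<Sum>j\<in>UNIV. \<Sum>k\<in>UNIV. \<Sum>l\<in>UNIV.
      ginv x i k p * ginv x j l p * sff x N i j p * sff x N k l p)"

definition support :: "(real \<times> real \<Rightarrow> real^3) \<Rightarrow> (real \<times> real \<Rightarrow> real^3) \<Rightarrow> real \<times> real \<Rightarrow> real" where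
  "support x N p = N p \<bullet> x p"

definition immersed_patch_with_gauss_map ::
  "(real \<times> real) set \<Rightarrow> (real \<times> real \<Rightarrow> real^3) \<Rightarrow> (real \<times> real \<Rightarrow> real^3) \<Rightarrow> bool" where
  "immersed_patch_with_gauss_map U x N \<longleftrightarrow> open U \<and> smooth_on U x \<and> smooth_on U N \<and>
     (\<forall>p\<in>U. cross3 (pd False x p) (pd True x p) \<noteq> 0 \<and> norm (N p) = 1 \<and>
        N p \<bullet> pd False x p = 0 \<and> N p \<bullet> pd True x p = 0)"

end

theory Submission
  imports Defs
begin

(*
  Both functions are shown to be Jacobi fields of  \<Delta> + |\<sigma>|\<^sup>2 - 2a(h - x\<^sub>3N\<^sub>3)  by computing
  the Laplacian of the Gauss map N in local coordinates (u,v):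

  (1) Calculus on the plane: rules for the partial derivatives  pd j  and Schwarz's
      theorem on the symmetry of mixed partials, proved from the mean value theorem.
  (2) For an immersed patch the Laplace-Beltrami operator reads
        \<Delta>f = g\<^sup>i\<^sup>j f\<^sub>i\<^sub>j + C\<^sup>j f\<^sub>j   with   C\<^sup>j = - g\<^sup>k\<^sup>l g\<^sup>j\<^sup>m \<langle>x\<^sub>k\<^sub>l, x\<^sub>m\<rangle>,
      hence \<Delta>x is normal:  \<Delta>x = (g\<^sup>i\<^sup>j h\<^sub>i\<^sub>j) N = 2H N.
  (3) The Weingarten equations and the symmetry of third derivatives of x (Codazzi)
      give  \<Delta>N = -|\<sigma>|\<^sup>2 N - grad(2H).
  (4) If 2H = a(x\<^sub>1\<^sup>2 + x\<^sub>2\<^sup>2) + b, then grad(2H) is 2a times the tangential part of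
      P = x\<^sub>1E\<^sub>1 + x\<^sub>2E\<^sub>2.  Moreover \<Delta>(x \<times> N) = x \<times> \<Delta>N, because \<Delta>x is parallel to N and
      the mixed term g\<^sup>i\<^sup>j (x\<^sub>i \<times> N\<^sub>j + x\<^sub>j \<times> N\<^sub>i) vanishes by symmetry of the shape operator.
  The theorem follows by taking third components, using \<langle>P, E\<^sub>3\<rangle> = 0, (x \<times> P)\<^sub>3 = 0 and
  \<langle>P, N\<rangle> = h - x\<^sub>3N\<^sub>3.
*)

section \<open>Partial derivatives on the plane\<close>

definition dir :: "bool \<Rightarrow> real \<times> real" where
  "dir j = (if j then (0, 1) else (1, 0))"

lemma pd_dir: "pd j f p = frechet_derivative f (at p) (dir j)"
  by (simp add: pd_def dir_def)

lemma norm_dir [simp]: "norm (dir j) = 1"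
  by (simp add: dir_def)

lemma has_frechet_derivative:
  "f differentiable at p \<Longrightarrow> (f has_derivative frechet_derivative f (at p)) (at p)"
  using frechet_derivative_works by blast

lemma pd_eqI: "(f has_derivative f') (at p) \<Longrightarrow> f' (dir j) = c \<Longrightarrow> pd j f p = c"
  unfolding pd_dir using frechet_derivative_at by metis

lemma pd_const: "pd j (\<lambda>q. c) p = 0"
  by (rule pd_eqI, rule has_derivative_const) simp

lemma pd_add:
  assumes "f differentiable at p" "g differentiable at p"
  shows "pd j (\<lambda>q. f q + g q) p = pd j f p + pd j g p"
  by (rule pd_eqI, rule has_derivative_add[OF has_frechet_derivative[OF assms(1)]
      has_frechet_derivative[OF assms(2)]]) (simp add: pd_dir)

lemma pd_diff:
  assumes "f differentiable at p" "g differentiable at p"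
  shows "pd j (\<lambda>q. f q - g q) p = pd j f p - pd j g p"
  by (rule pd_eqI, rule has_derivative_diff[OF has_frechet_derivative[OF assms(1)]
      has_frechet_derivative[OF assms(2)]]) (simp add: pd_dir)

lemma pd_sum:
  assumes "finite A" "\<And>i. i \<in> A \<Longrightarrow> f i differentiable at p"
  shows "pd j (\<lambda>q. \<Sum>i\<in>A. f i q) p = (\<Sum>i\<in>A. pd j (f i) p)"
  by (rule pd_eqI, rule has_derivative_sum[OF has_frechet_derivative[OF assms(2)]])
    (simp_all add: pd_dir)

lemma pd_mult:
  fixes f g :: "real \<times> real \<Rightarrow> real"
  assumes "f differentiable at p" "g differentiable at p"
  shows "pd j (\<lambda>q. f q * g q) p = pd j f p * g p + f p * pd j g p"
  by (rule pd_eqI, rule has_derivative_mult[OF has_frechet_derivative[OF assms(1)]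
      has_frechet_derivative[OF assms(2)]]) (simp add: pd_dir)

lemma pd_cmult:
  fixes f :: "real \<times> real \<Rightarrow> real"
  assumes "f differentiable at p"
  shows "pd j (\<lambda>q. c * f q) p = c * pd j f p"
  by (rule pd_eqI, rule has_derivative_mult_right[OF has_frechet_derivative[OF assms]])
    (simp add: pd_dir)

lemma pd_divide:
  fixes f g :: "real \<times> real \<Rightarrow> real"
  assumes "f differentiable at p" "g differentiable at p" "g p \<noteq> 0"
  shows "pd j (\<lambda>q. f q / g q) p = (pd j f p * g p - f p * pd j g p) / (g p)\<^sup>2"
  by (rule pd_eqI, rule has_derivative_divide[OF has_frechet_derivative[OF assms(1)]
      has_frechet_derivative[OF assms(2)] assms(3)])
    (use assms(3) in \<open>simp add: pd_dir field_simps power2_eq_square\<close>)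

lemma pd_sqrt:
  fixes f :: "real \<times> real \<Rightarrow> real"
  assumes "f differentiable at p" "f p > 0"
  shows "pd j (\<lambda>q. sqrt (f q)) p = pd j f p / (2 * sqrt (f p))"
proof -
  have "((\<lambda>q. sqrt (f q)) has_derivative
      (\<lambda>v. frechet_derivative f (at p) v * (inverse (sqrt (f p)) / 2))) (at p)"
    by (rule DERIV_compose_FDERIV[OF DERIV_real_sqrt[OF assms(2)] has_frechet_derivative[OF assms(1)]])
  then show ?thesis by (rule pd_eqI) (simp add: pd_dir field_simps)
qed

lemma pd_inner:
  assumes "f differentiable at p" "g differentiable at p"
  shows "pd j (\<lambda>q. f q \<bullet> g q) p = pd j f p \<bullet> g p + f p \<bullet> pd j g p"
  by (rule pd_eqI, rule has_derivative_inner[OF has_frechet_derivative[OF assms(1)]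
      has_frechet_derivative[OF assms(2)]]) (simp add: pd_dir)

lemma pd_vec_nth:
  fixes f :: "real \<times> real \<Rightarrow> real^'n"
  assumes "f differentiable at p"
  shows "pd j (\<lambda>q. f q $ k) p = pd j f p $ k"
  by (rule pd_eqI, rule bounded_linear.has_derivative[OF bounded_linear_vec_nth
      has_frechet_derivative[OF assms]]) (simp add: pd_dir)

lemma bounded_bilinear_cross3: "bounded_bilinear cross3"
  using bilinear_conv_bounded_bilinear bilinear_cross by blast

lemma pd_cross3:
  assumes "f differentiable at p" "g differentiable at p"
  shows "pd j (\<lambda>q. cross3 (f q) (g q)) p = cross3 (pd j f p) (g p) + cross3 (f p) (pd j g p)"
  by (rule pd_eqI, rule bounded_bilinear.FDERIV[OF bounded_bilinear_cross3
      has_frechet_derivative[OF assms(1)] has_frechet_derivative[OF assms(2)]]) (simp add: pd_dir)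

lemma differentiable_vec_nth:
  "f differentiable at p \<Longrightarrow> (\<lambda>q. f q $ k) differentiable at p"
  using differentiableI[OF bounded_linear.has_derivative[OF bounded_linear_vec_nth
      has_frechet_derivative]] by blast

lemma differentiable_cross3:
  "f differentiable at p \<Longrightarrow> g differentiable at p \<Longrightarrow> (\<lambda>q. cross3 (f q) (g q)) differentiable at p"
  using differentiableI[OF bounded_bilinear.FDERIV[OF bounded_bilinear_cross3
      has_frechet_derivative has_frechet_derivative]] by blast

lemma pd_transform_open:
  assumes "f differentiable at p" "open U" "p \<in> U" "\<And>q. q \<in> U \<Longrightarrow> f q = g q"
  shows "pd j f p = pd j g p"
  unfolding pd_dir using frechet_derivative_transform_within_open[OF assms] by simp

lemma differentiable_transform_open:
  assumes "g differentiable at p" "open U" "p \<in> U" "\<And>q. q \<in> U \<Longrightarrow> g q = f q"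
  shows "f differentiable at p"
  using assms has_derivative_transform_within_open unfolding differentiable_def by blast

lemma pd_locally_const:
  assumes "open U" "p \<in> U" "\<And>q. q \<in> U \<Longrightarrow> f q = c"
  shows "pd j f p = 0"
proof -
  have "pd j (\<lambda>q. c) p = pd j f p"
    by (rule pd_transform_open[OF _ assms(1,2)]) (use assms(3) in auto)
  then show ?thesis by (simp add: pd_const)
qed

section \<open>Symmetry of mixed partial derivatives\<close>

lemma pd_along_line:
  fixes f :: "real \<times> real \<Rightarrow> real"
  assumes "f differentiable at (q + t *\<^sub>R dir j)"
  shows "((\<lambda>s. f (q + s *\<^sub>R dir j)) has_real_derivative pd j f (q + t *\<^sub>R dir j)) (at t)"
proof -
  let ?D = "frechet_derivative f (at (q + t *\<^sub>R dir j))"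
  have line: "((\<lambda>s. q + s *\<^sub>R dir j) has_derivative (\<lambda>s. s *\<^sub>R dir j)) (at t)"
    by (auto intro!: derivative_eq_intros)
  have "((\<lambda>s. f (q + s *\<^sub>R dir j)) has_derivative (\<lambda>s. ?D (s *\<^sub>R dir j))) (at t)"
    using has_derivative_compose[OF line has_frechet_derivative[OF assms]] by (simp add: comp_def)
  moreover have "s * pd j f (q + t *\<^sub>R dir j) = ?D (s *\<^sub>R dir j)" for s
    using linear_scale[OF has_derivative_linear[OF has_frechet_derivative[OF assms]]]
    by (simp add: pd_dir)
  ultimately show ?thesis by (rule has_derivative_imp_has_field_derivative)
qed

lemma second_difference_mvt:
  fixes f :: "real \<times> real \<Rightarrow> real"
  assumes h: "0 < h"
    and df: "\<And>s. 0 \<le> s \<Longrightarrow> s \<le> h \<Longrightarrow> f differentiable at (p + s *\<^sub>R dir j)"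
    and dfv: "\<And>s. 0 \<le> s \<Longrightarrow> s \<le> h \<Longrightarrow> f differentiable at (p + v + s *\<^sub>R dir j)"
  shows "\<exists>\<theta>. 0 < \<theta> \<and> \<theta> < h \<and> f (p + h *\<^sub>R dir j + v) - f (p + h *\<^sub>R dir j) - f (p + v) + f p
    = h * (pd j f (p + v + \<theta> *\<^sub>R dir j) - pd j f (p + \<theta> *\<^sub>R dir j))"
proof -
  define \<phi> where "\<phi> s = f (p + v + s *\<^sub>R dir j) - f (p + s *\<^sub>R dir j)" for s
  have "\<exists>\<theta>. 0 < \<theta> \<and> \<theta> < h \<and>
      \<phi> h - \<phi> 0 = (h - 0) * (pd j f (p + v + \<theta> *\<^sub>R dir j) - pd j f (p + \<theta> *\<^sub>R dir j))"
  proof (rule MVT2[OF h])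
    fix s assume "0 \<le> s" "s \<le> h"
    then show "(\<phi> has_real_derivative
        pd j f (p + v + s *\<^sub>R dir j) - pd j f (p + s *\<^sub>R dir j)) (at s)"
      unfolding \<phi>_def by (intro DERIV_diff pd_along_line df dfv)
  qed
  then show ?thesis by (simp add: \<phi>_def algebra_simps)
qed

lemma differentiable_two_point_estimate:
  fixes g :: "real \<times> real \<Rightarrow> real"
  assumes "g differentiable at p" "e > 0"
  shows "\<exists>d>0. \<forall>w1 w2. norm (w1 - p) < d \<longrightarrow> norm (w2 - p) < d \<longrightarrow>
    \<bar>g w1 - g w2 - frechet_derivative g (at p) (w1 - w2)\<bar> \<le> e * (norm (w1 - p) + norm (w2 - p))"
proof -
  let ?D = "frechet_derivative g (at p)"
  have Dg: "(g has_derivative ?D) (at p)" using has_frechet_derivative[OF assms(1)] .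
  obtain d where d: "d > 0"
    "\<And>y. norm (y - p) < d \<Longrightarrow> \<bar>g y - g p - ?D (y - p)\<bar> \<le> e * norm (y - p)"
    using Dg[unfolded has_derivative_at_alt] assms(2) by auto
  have "\<bar>g w1 - g w2 - ?D (w1 - w2)\<bar> \<le> e * (norm (w1 - p) + norm (w2 - p))"
    if "norm (w1 - p) < d" "norm (w2 - p) < d" for w1 w2
  proof -
    have "?D (w1 - w2) = ?D (w1 - p) - ?D (w2 - p)"
      using linear_diff[OF has_derivative_linear[OF Dg], of "w1 - p" "w2 - p"] by simp
    then show ?thesis using d(2)[OF that(1)] d(2)[OF that(2)] by (simp add: distrib_left)
  qed
  then show ?thesis using d(1) by blast
qed

lemma square_in_ball:
  assumes "0 \<le> s" "s \<le> h" "0 \<le> t" "t \<le> h"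
  shows "norm (t *\<^sub>R dir i + s *\<^sub>R dir j) \<le> 2 * h"
    and "2 * h < r \<Longrightarrow> p + t *\<^sub>R dir i + s *\<^sub>R dir j \<in> ball p r"
proof -
  show norm: "norm (t *\<^sub>R dir i + s *\<^sub>R dir j) \<le> 2 * h"
    using norm_triangle_ineq[of "t *\<^sub>R dir i" "s *\<^sub>R dir j"] assms by simp
  have "dist p (p + (t *\<^sub>R dir i + s *\<^sub>R dir j)) = norm (t *\<^sub>R dir i + s *\<^sub>R dir j)"
    by (metis add_diff_cancel_left' dist_commute dist_norm)
  then show "2 * h < r \<Longrightarrow> p + t *\<^sub>R dir i + s *\<^sub>R dir j \<in> ball p r"
    using norm by (simp add: add.assoc)
qed

lemma mixed_difference_estimate:
  fixes f :: "real \<times> real \<Rightarrow> real"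
  assumes U: "open U" "p \<in> U" and df: "\<And>q. q \<in> U \<Longrightarrow> f differentiable at q"
    and dfj: "pd j f differentiable at p" and e: "e > 0"
  shows "\<exists>d>0. \<forall>h. 0 < h \<longrightarrow> h < d \<longrightarrow>
    \<bar>f (p + h *\<^sub>R dir j + h *\<^sub>R dir (\<not> j)) - f (p + h *\<^sub>R dir j) - f (p + h *\<^sub>R dir (\<not> j)) + f p
      - h * h * pd (\<not> j) (pd j f) p\<bar> \<le> 3 * e * (h * h)"
proof -
  let ?u = "dir j" and ?v = "dir (\<not> j)" and ?g = "pd j f"
  let ?D = "frechet_derivative ?g (at p)"
  obtain d1 where d1: "d1 > 0" "\<And>w1 w2. norm (w1 - p) < d1 \<Longrightarrow> norm (w2 - p) < d1 \<Longrightarrow>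
      \<bar>?g w1 - ?g w2 - ?D (w1 - w2)\<bar> \<le> e * (norm (w1 - p) + norm (w2 - p))"
    using differentiable_two_point_estimate[OF dfj e] by blast
  obtain r where r: "r > 0" "ball p r \<subseteq> U" using U open_contains_ball by blast
  define d where "d = min d1 r / 2"
  have "\<bar>f (p + h *\<^sub>R ?u + h *\<^sub>R ?v) - f (p + h *\<^sub>R ?u) - f (p + h *\<^sub>R ?v) + f p
      - h * h * pd (\<not> j) ?g p\<bar> \<le> 3 * e * (h * h)" if h: "0 < h" "h < d" for h
  proof -
    have inU: "p + t *\<^sub>R ?v + s *\<^sub>R ?u \<in> U" if "0 \<le> s" "s \<le> h" "0 \<le> t" "t \<le> h" for s t
    proof -
      have "2 * h < r" using h by (simp add: d_def)
      then show ?thesis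
        using square_in_ball(2)[OF that, where i = "\<not> j" and j = j and p = p] r(2) by blast
    qed
    obtain \<theta> where \<theta>: "0 < \<theta>" "\<theta> < h"
      "f (p + h *\<^sub>R ?u + h *\<^sub>R ?v) - f (p + h *\<^sub>R ?u) - f (p + h *\<^sub>R ?v) + f p
        = h * (?g (p + h *\<^sub>R ?v + \<theta> *\<^sub>R ?u) - ?g (p + \<theta> *\<^sub>R ?u))"
      using second_difference_mvt[OF h(1), where f = f and p = p and j = j and v = "h *\<^sub>R ?v"]
        df inU[of _ 0] inU[of _ h] h(1) by auto
    let ?w1 = "p + h *\<^sub>R ?v + \<theta> *\<^sub>R ?u" and ?w2 = "p + \<theta> *\<^sub>R ?u"
    have n1: "norm (?w1 - p) \<le> 2 * h" and n2: "norm (?w2 - p) \<le> h"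
      using square_in_ball(1)[of \<theta> h h] \<theta> by (simp_all add: add.assoc)
    have "?D (?w1 - ?w2) = h * pd (\<not> j) ?g p"
      using linear_scale[OF has_derivative_linear[OF has_frechet_derivative[OF dfj]], of h ?v]
      by (simp add: pd_dir)
    then have "\<bar>?g ?w1 - ?g ?w2 - h * pd (\<not> j) ?g p\<bar> \<le> e * (norm (?w1 - p) + norm (?w2 - p))"
      using d1(2)[of ?w1 ?w2] n1 n2 h by (simp add: d_def)
    also have "\<dots> \<le> e * (3 * h)" using n1 n2 e by (intro mult_left_mono) auto
    finally have bound: "\<bar>?g ?w1 - ?g ?w2 - h * pd (\<not> j) ?g p\<bar> \<le> 3 * e * h" by simp
    have "f (p + h *\<^sub>R ?u + h *\<^sub>R ?v) - f (p + h *\<^sub>R ?u) - f (p + h *\<^sub>R ?v) + f p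
        - h * h * pd (\<not> j) ?g p = h * (?g ?w1 - ?g ?w2 - h * pd (\<not> j) ?g p)"
      using \<theta>(3) by (simp add: algebra_simps)
    then have "\<bar>f (p + h *\<^sub>R ?u + h *\<^sub>R ?v) - f (p + h *\<^sub>R ?u) - f (p + h *\<^sub>R ?v) + f p
        - h * h * pd (\<not> j) ?g p\<bar> = h * \<bar>?g ?w1 - ?g ?w2 - h * pd (\<not> j) ?g p\<bar>"
      using h(1) by (simp add: abs_mult)
    also have "\<dots> \<le> h * (3 * e * h)" using bound h(1) by (simp add: mult_left_mono)
    finally show ?thesis by (simp add: ac_simps)
  qed
  moreover have "d > 0" using d1 r by (simp add: d_def)
  ultimately show ?thesis by blast
qed

text \<open>Schwarz's theorem: the second difference is symmetric in the two directions, so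
  both mixed partials are its limit divided by \<open>h\<^sup>2\<close>.\<close>
lemma pd_commute_real:
  fixes f :: "real \<times> real \<Rightarrow> real"
  assumes U: "open U" "p \<in> U" and df: "\<And>q. q \<in> U \<Longrightarrow> f differentiable at q"
    and du: "pd False f differentiable at p" and dv: "pd True f differentiable at p"
  shows "pd True (pd False f) p = pd False (pd True f) p"
proof (rule ccontr)
  let ?A = "pd True (pd False f) p" and ?B = "pd False (pd True f) p"
  let ?\<Delta> = "\<lambda>h. f (p + h *\<^sub>R dir False + h *\<^sub>R dir True) - f (p + h *\<^sub>R dir False)
    - f (p + h *\<^sub>R dir True) + f p"
  assume ne: "?A \<noteq> ?B"
  define e where "e = \<bar>?A - ?B\<bar> / 12"
  have e: "e > 0" using ne by (simp add: e_def)
  obtain d1 where d1: "d1 > 0" "\<And>h. 0 < h \<Longrightarrow> h < d1 \<Longrightarrow> \<bar>?\<Delta> h - h * h * ?A\<bar> \<le> 3 * e * (h * h)"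
    using mixed_difference_estimate[OF U df du e] by auto
  obtain d2 where d2: "d2 > 0" "\<And>h. 0 < h \<Longrightarrow> h < d2 \<Longrightarrow> \<bar>?\<Delta> h - h * h * ?B\<bar> \<le> 3 * e * (h * h)"
    using mixed_difference_estimate[OF U df dv e] by (auto simp: algebra_simps)
  define h where "h = min d1 d2 / 2"
  have h: "0 < h" "h < d1" "h < d2" using d1 d2 by (auto simp: h_def)
  have "h * h * \<bar>?A - ?B\<bar> = \<bar>h * h * (?A - ?B)\<bar>" using h(1) by (simp add: abs_mult)
  also have "\<dots> = \<bar>(?\<Delta> h - h * h * ?B) - (?\<Delta> h - h * h * ?A)\<bar>" by (simp add: algebra_simps)
  also have "\<dots> \<le> 6 * e * (h * h)" using d1(2)[OF h(1,2)] d2(2)[OF h(1,3)] by linarith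
  finally have "h * h * \<bar>?A - ?B\<bar> \<le> (h * h) * (\<bar>?A - ?B\<bar> / 2)" by (simp add: e_def)
  then show False using h(1) ne by (simp add: mult_le_cancel_left_pos)
qed

lemma pd_commute_vec:
  fixes F :: "real \<times> real \<Rightarrow> real^'n"
  assumes U: "open U" "p \<in> U" and dF: "\<And>q. q \<in> U \<Longrightarrow> F differentiable at q"
    and dFj: "\<And>j q. q \<in> U \<Longrightarrow> pd j F differentiable at q"
  shows "pd i (pd j F) p = pd j (pd i F) p"
proof -
  have swap: "pd True (pd False F) p $ k = pd False (pd True F) p $ k" for k
  proof -
    let ?f = "\<lambda>q. F q $ k"
    have comp: "pd j F q $ k = pd j ?f q" if "q \<in> U" for j q
      using pd_vec_nth[OF dF[OF that]] by simp
    have d2: "pd j ?f differentiable at p" for j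
      by (rule differentiable_transform_open[OF differentiable_vec_nth[OF dFj[OF U(2), of j], of k] U])
        (simp add: comp)
    have second: "pd i (pd j F) p $ k = pd i (pd j ?f) p" for i j
    proof -
      have "pd i (pd j F) p $ k = pd i (\<lambda>q. pd j F q $ k) p"
        using pd_vec_nth[OF dFj[OF U(2)]] by simp
      also have "\<dots> = pd i (pd j ?f) p"
        by (rule pd_transform_open[OF differentiable_vec_nth[OF dFj[OF U(2), of j], of k] U])
          (simp add: comp)
      finally show ?thesis .
    qed
    show ?thesis unfolding second
      by (rule pd_commute_real[OF U _ d2 d2]) (simp add: differentiable_vec_nth dF)
  qed
  then show ?thesis by (cases i; cases j) (auto simp: vec_eq_iff)
qed

lemma ipd_snoc: "ipd js (pd j F) = ipd (js @ [j]) F"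
  by (induction js) auto

lemma smooth_on_pd: "smooth_on U F \<Longrightarrow> smooth_on U (pd j F)"
  unfolding smooth_on_def by (metis ipd_snoc)

lemma smooth_on_differentiable: "smooth_on U F \<Longrightarrow> open U \<Longrightarrow> p \<in> U \<Longrightarrow> F differentiable at p"
  unfolding smooth_on_def by (metis differentiable_on_eq_differentiable_at ipd.simps(1))

lemma smooth_on_pd_commute:
  fixes F :: "real \<times> real \<Rightarrow> real^'n"
  shows "smooth_on U F \<Longrightarrow> open U \<Longrightarrow> p \<in> U \<Longrightarrow> pd i (pd j F) p = pd j (pd i F) p"
  by (rule pd_commute_vec) (auto intro: smooth_on_differentiable smooth_on_pd)

lemma orthogonal_to_frame_eq_0:
  fixes a b n w :: "real^3"
  assumes c: "cross3 a b \<noteq> 0" and na: "n \<bullet> a = 0" and nb: "n \<bullet> b = 0" and nn: "n \<bullet> n = 1"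
    and wa: "w \<bullet> a = 0" and wb: "w \<bullet> b = 0" and wn: "w \<bullet> n = 0"
  shows "w = 0"
proof -
  let ?c = "cross3 a b"
  have parallel: "(?c \<bullet> ?c) *\<^sub>R z = (?c \<bullet> z) *\<^sub>R ?c" if "z \<bullet> a = 0" "z \<bullet> b = 0" for z
  proof -
    have "cross3 ?c z = - cross3 z ?c" by (rule cross_skew)
    also have "\<dots> = - ((z \<bullet> b) *\<^sub>R a - (z \<bullet> a) *\<^sub>R b)" by (simp add: Lagrange)
    finally have "cross3 ?c z = 0" using that by simp
    then show ?thesis using Lagrange[of ?c ?c z] by simp
  qed
  have cc: "?c \<bullet> ?c > 0" using c by simp
  have "(?c \<bullet> ?c) * (n \<bullet> n) = (?c \<bullet> n) * (?c \<bullet> n)"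
    using arg_cong[OF parallel[OF na nb], of "\<lambda>z. z \<bullet> n"] by (simp add: inner_commute)
  then have cn: "?c \<bullet> n \<noteq> 0" using cc nn by auto
  have "(?c \<bullet> ?c) * (w \<bullet> n) = (?c \<bullet> w) * (?c \<bullet> n)"
    using arg_cong[OF parallel[OF wa wb], of "\<lambda>z. z \<bullet> n"] by (simp add: inner_commute)
  then have "?c \<bullet> w = 0" using wn cn by simp
  then have "(?c \<bullet> ?c) *\<^sub>R w = 0" using parallel[OF wa wb] by simp
  then show ?thesis using cc by simp
qed

lemma gmet_fun: "gmet x i j = (\<lambda>q. pd i x q \<bullet> pd j x q)"
  by (rule ext) (simp add: gmet_def)

lemma gdet_fun:
  "gdet x = (\<lambda>q. gmet x False False q * gmet x True True q - gmet x False True q * gmet x True False q)"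
  by (rule ext) (simp add: gdet_def)

lemma ginv_fun:
  "ginv x i j = (\<lambda>q. (if i = j then gmet x (\<not> i) (\<not> j) q else - gmet x i j q) / gdet x q)"
  by (rule ext) (simp add: ginv_def)

lemma sff_fun: "sff x N i j = (\<lambda>q. pd i (pd j x) q \<bullet> N q)"
  by (rule ext) (simp add: sff_def)

lemma gmet_sym: "gmet x i j p = gmet x j i p"
  by (simp add: gmet_def inner_commute)

lemma ginv_sym: "ginv x i j p = ginv x j i p"
  by (simp add: ginv_def gmet_sym)

lemma inner_pd_pd: "pd a x p \<bullet> pd b x p = gmet x a b p"
  by (simp add: gmet_def)

lemma gdet_eq:
  "gdet x p = gmet x False False p * gmet x True True p - gmet x False True p * gmet x False True p"
  using gmet_sym[of x True False p] by (simp add: gdet_def)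

locale patch =
  fixes U :: "(real \<times> real) set" and x N :: "real \<times> real \<Rightarrow> real^3"
  assumes immersed: "immersed_patch_with_gauss_map U x N"
begin

lemma open_U: "open U" and smooth_x: "smooth_on U x" and smooth_N: "smooth_on U N"
  using immersed by (auto simp: immersed_patch_with_gauss_map_def)

lemma normal_perp: "q \<in> U \<Longrightarrow> N q \<bullet> pd i x q = 0"
  using immersed by (cases i) (auto simp: immersed_patch_with_gauss_map_def)

lemma normal_unit: "q \<in> U \<Longrightarrow> N q \<bullet> N q = 1"
  using immersed by (auto simp: immersed_patch_with_gauss_map_def norm_eq_1)

lemma nondegenerate: "q \<in> U \<Longrightarrow> cross3 (pd False x q) (pd True x q) \<noteq> 0"
  using immersed by (auto simp: immersed_patch_with_gauss_map_def)

lemma dx: "q \<in> U \<Longrightarrow> x differentiable at q"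
  using smooth_on_differentiable[OF smooth_x open_U] .

lemma dx1: "q \<in> U \<Longrightarrow> pd i x differentiable at q"
  using smooth_on_differentiable[OF smooth_on_pd[OF smooth_x] open_U] .

lemma dx2: "q \<in> U \<Longrightarrow> pd i (pd j x) differentiable at q"
  using smooth_on_differentiable[OF smooth_on_pd[OF smooth_on_pd[OF smooth_x]] open_U] .

lemma dN: "q \<in> U \<Longrightarrow> N differentiable at q"
  using smooth_on_differentiable[OF smooth_N open_U] .

lemma dN1: "q \<in> U \<Longrightarrow> pd i N differentiable at q"
  using smooth_on_differentiable[OF smooth_on_pd[OF smooth_N] open_U] .

lemma dgmet: "q \<in> U \<Longrightarrow> gmet x i j differentiable at q"
  unfolding gmet_fun by (simp add: dx1)

lemma dgdet: "q \<in> U \<Longrightarrow> gdet x differentiable at q"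
  unfolding gdet_fun by (simp add: dgmet)

text \<open>The Gram determinant is the squared area element \<open>|x\<^sub>u \<times> x\<^sub>v|\<^sup>2\<close>.\<close>
lemma gdet_pos: "q \<in> U \<Longrightarrow> gdet x q > 0"
proof -
  assume q: "q \<in> U"
  let ?a = "pd False x q" and ?b = "pd True x q"
  have "gdet x q = (norm ?a * norm ?b)\<^sup>2 - (?a \<bullet> ?b)\<^sup>2"
    by (simp add: gdet_def gmet_def power_mult_distrib power2_norm_eq_inner inner_commute
        power2_eq_square[symmetric])
  also have "\<dots> = (norm (cross3 ?a ?b))\<^sup>2" using norm_cross_dot[of ?a ?b] by simp
  finally show ?thesis using nondegenerate[OF q] by simp
qed

lemma dginv: "q \<in> U \<Longrightarrow> ginv x i j differentiable at q"
  unfolding ginv_fun using gdet_pos[of q]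
  by (cases "i = j") (auto intro!: differentiable_divide simp: dgmet dgdet)

lemma dsqrt_gdet: "q \<in> U \<Longrightarrow> (\<lambda>q. sqrt (gdet x q)) differentiable at q"
  using DERIV_compose_FDERIV[OF DERIV_real_sqrt[OF gdet_pos] has_frechet_derivative[OF dgdet]]
  unfolding differentiable_def by blast

lemma dsff: "q \<in> U \<Longrightarrow> sff x N i j differentiable at q"
  unfolding sff_fun by (simp add: dx2 dN)

lemma pd_x_commute: "p \<in> U \<Longrightarrow> pd i (pd j x) p = pd j (pd i x) p"
  using smooth_on_pd_commute[OF smooth_x open_U] .

lemma pd3_x_commute: "p \<in> U \<Longrightarrow> pd m (pd i (pd j x)) p = pd i (pd j (pd m x)) p"
proof -
  assume p: "p \<in> U"
  have "pd m (pd i (pd j x)) p = pd i (pd m (pd j x)) p"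
    using smooth_on_pd_commute[OF smooth_on_pd[OF smooth_x] open_U p] .
  also have "\<dots> = pd i (pd j (pd m x)) p"
    by (rule pd_transform_open[OF dx2[OF p] open_U p]) (simp add: pd_x_commute)
  finally show ?thesis .
qed

lemma sff_sym: "p \<in> U \<Longrightarrow> sff x N i j p = sff x N j i p"
  by (simp add: sff_def pd_x_commute)

lemma pd_N_perp_N: "p \<in> U \<Longrightarrow> pd j N p \<bullet> N p = 0"
proof -
  assume p: "p \<in> U"
  have "pd j (\<lambda>q. N q \<bullet> N q) p = 0" by (rule pd_locally_const[OF open_U p]) (simp add: normal_unit)
  then show ?thesis by (simp add: pd_inner dN p inner_commute)
qed

lemma pd2_N_inner_N: "p \<in> U \<Longrightarrow> pd k (pd j N) p \<bullet> N p + pd j N p \<bullet> pd k N p = 0"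
proof -
  assume p: "p \<in> U"
  have "pd k (\<lambda>q. pd j N q \<bullet> N q) p = 0"
    by (rule pd_locally_const[OF open_U p]) (simp add: pd_N_perp_N)
  then show ?thesis by (simp add: pd_inner dN dN1 p)
qed

lemma pd_N_inner_x: "p \<in> U \<Longrightarrow> pd j N p \<bullet> pd i x p + N p \<bullet> pd j (pd i x) p = 0"
proof -
  assume p: "p \<in> U"
  have "pd j (\<lambda>q. N q \<bullet> pd i x q) p = 0"
    by (rule pd_locally_const[OF open_U p]) (simp add: normal_perp)
  then show ?thesis by (simp add: pd_inner dN dx1 p)
qed

lemma pd2_N_inner_x: "p \<in> U \<Longrightarrow> pd k (pd j N) p \<bullet> pd i x p + pd j N p \<bullet> pd k (pd i x) p
   + (pd k N p \<bullet> pd j (pd i x) p + N p \<bullet> pd k (pd j (pd i x)) p) = 0"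
proof -
  assume p: "p \<in> U"
  have "pd k (\<lambda>q. pd j N q \<bullet> pd i x q + N q \<bullet> pd j (pd i x) q) p = 0"
    by (rule pd_locally_const[OF open_U p]) (simp add: pd_N_inner_x)
  then show ?thesis by (simp add: pd_inner pd_add dN dx1 dN1 dx2 p)
qed

lemma ginv_gmet:
  assumes p: "p \<in> U"
  shows "(\<Sum>l\<in>UNIV. ginv x k l p * gmet x l m p) = (if k = m then 1 else 0)"
proof -
  have D: "gdet x p \<noteq> 0" using gdet_pos[OF p] by simp
  show ?thesis using D gmet_sym[of x True False p]
    by (cases k; cases m; simp add: UNIV_bool ginv_def D field_simps; simp add: gdet_eq)
qed

lemma tangent_normal_decomp:
  assumes p: "p \<in> U"
  shows "v = (v \<bullet> N p) *\<^sub>R N p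
    + (\<Sum>k\<in>UNIV. \<Sum>l\<in>UNIV. (ginv x k l p * (v \<bullet> pd k x p)) *\<^sub>R pd l x p)"
proof -
  let ?w = "v - ((v \<bullet> N p) *\<^sub>R N p
    + (\<Sum>k\<in>UNIV. \<Sum>l\<in>UNIV. (ginv x k l p * (v \<bullet> pd k x p)) *\<^sub>R pd l x p))"
  have xN: "pd i x p \<bullet> N p = 0" for i using normal_perp[OF p] by (simp add: inner_commute)
  have w_tangent: "?w \<bullet> pd m x p = 0" for m
  proof -
    have "?w \<bullet> pd m x p = v \<bullet> pd m x p
        - (\<Sum>k\<in>UNIV. (v \<bullet> pd k x p) * (\<Sum>l\<in>UNIV. ginv x k l p * gmet x l m p))"
      by (simp add: inner_diff_left inner_add_left inner_sum_left xN normal_perp[OF p]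
          sum_distrib_left gmet_def mult_ac)
    also have "\<dots> = 0" unfolding ginv_gmet[OF p] by (cases m) (simp_all add: UNIV_bool)
    finally show ?thesis .
  qed
  have "?w = 0"
  proof (rule orthogonal_to_frame_eq_0[OF nondegenerate[OF p]])
    show "N p \<bullet> pd False x p = 0" "N p \<bullet> pd True x p = 0" using normal_perp[OF p] by auto
    show "N p \<bullet> N p = 1" using normal_unit[OF p] .
    show "?w \<bullet> N p = 0"
      using normal_perp[OF p] normal_unit[OF p] by (simp add: UNIV_bool inner_diff_left inner_add_left xN)
    show "?w \<bullet> pd False x p = 0" "?w \<bullet> pd True x p = 0" using w_tangent by auto
  qed
  then show ?thesis by simp
qed

lemma weingarten:
  assumes p: "p \<in> U"
  shows "pd i N p = (\<Sum>k\<in>UNIV. \<Sum>l\<in>UNIV. (- ginv x k l p * sff x N i k p) *\<^sub>R pd l x p)"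
proof -
  have "pd i N p \<bullet> pd k x p = - sff x N i k p" for k
    using pd_N_inner_x[OF p, of i k] by (simp add: sff_def inner_commute)
  then show ?thesis using tangent_normal_decomp[OF p, of "pd i N p"] by (simp add: pd_N_perp_N[OF p])
qed

lemma inner_pd_N:
  assumes p: "p \<in> U"
  shows "pd j N p \<bullet> pd i N p = (\<Sum>k\<in>UNIV. \<Sum>k'\<in>UNIV. sff x N j k p * sff x N i k' p * ginv x k k' p)"
proof -
  have "pd j N p \<bullet> pd i N p = (\<Sum>k\<in>UNIV. \<Sum>k'\<in>UNIV. sff x N j k p * sff x N i k' p *
          (\<Sum>l\<in>UNIV. ginv x k l p * (\<Sum>l'\<in>UNIV. ginv x k' l' p * gmet x l' l p)))"
    unfolding weingarten[OF p]
    by (simp add: UNIV_bool inner_add_left inner_add_right inner_pd_pd gmet_sym[of x True False]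
        algebra_simps)
  also have "\<dots> = (\<Sum>k\<in>UNIV. \<Sum>k'\<in>UNIV. sff x N j k p * sff x N i k' p * ginv x k k' p)"
    unfolding ginv_gmet[OF p] by (simp add: UNIV_bool)
  finally show ?thesis .
qed

end

section \<open>The Laplace-Beltrami operator in coordinates\<close>

text \<open>The first-order coefficients \<open>C\<^sup>j\<close> of \<open>\<Delta>f = g\<^sup>i\<^sup>j f\<^sub>i\<^sub>j + C\<^sup>j f\<^sub>j\<close>.\<close>
definition lapl_coeff :: "(real \<times> real \<Rightarrow> real^3) \<Rightarrow> bool \<Rightarrow> real \<times> real \<Rightarrow> real" where
  "lapl_coeff x j p = (\<Sum>i\<in>UNIV. pd i (\<lambda>q. sqrt (gdet x q)) p / sqrt (gdet x p) * ginv x i j p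
      + pd i (ginv x i j) p)"

text \<open>Expanding the divergence form of \<open>\<Delta>\<close>; \<open>s\<close> stands for \<open>\<surd>det g\<close>.\<close>
lemma lapl_coords_algebra:
  fixes s :: real and A :: "bool \<Rightarrow> real" and g dg f2 :: "bool \<Rightarrow> bool \<Rightarrow> real"
    and f1 :: "bool \<Rightarrow> real"
  assumes "s \<noteq> 0"
  shows "1 / s * (\<Sum>i\<in>UNIV. A i * (\<Sum>j\<in>UNIV. g i j * f1 j)
      + s * (\<Sum>j\<in>UNIV. dg i j * f1 j + g i j * f2 i j))
    = (\<Sum>i\<in>UNIV. \<Sum>j\<in>UNIV. g i j * f2 i j) + (\<Sum>j\<in>UNIV. (\<Sum>i\<in>UNIV. A i / s * g i j + dg i j) * f1 j)"
  using assms by (simp add: UNIV_bool field_simps)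

definition adj :: "(real \<times> real \<Rightarrow> real^3) \<Rightarrow> bool \<Rightarrow> bool \<Rightarrow> real \<times> real \<Rightarrow> real" where
  "adj x i j p = (if i = j then gmet x (\<not> i) (\<not> j) p else - gmet x i j p)"

definition dadj :: "(real \<times> real \<Rightarrow> real^3) \<Rightarrow> bool \<Rightarrow> bool \<Rightarrow> bool \<Rightarrow> real \<times> real \<Rightarrow> real" where
  "dadj x k i j p = (if i = j then pd k (gmet x (\<not> i) (\<not> j)) p else - pd k (gmet x i j) p)"

definition christoffel :: "(real \<times> real \<Rightarrow> real^3) \<Rightarrow> bool \<Rightarrow> bool \<Rightarrow> bool \<Rightarrow> real \<times> real \<Rightarrow> real" where
  "christoffel x k l m p = pd k (pd l x) p \<bullet> pd m x p"

lemma ginv_adj: "ginv x i j p = adj x i j p / gdet x p"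
  by (simp add: ginv_def adj_def)

lemma christoffel_inner: "pd k (pd l x) p \<bullet> pd m x p = christoffel x k l m p"
  by (simp add: christoffel_def)

lemma inner_pd_pd2: "pd a x p \<bullet> pd k (pd b x) p = pd k (pd b x) p \<bullet> pd a x p"
  by (rule inner_commute)

context patch
begin

lemma lapl_coords:
  assumes p: "p \<in> U" and df: "\<And>j. pd j f differentiable at p"
  shows "lapl x f p = (\<Sum>i\<in>UNIV. \<Sum>j\<in>UNIV. ginv x i j p * pd i (pd j f) p)
    + (\<Sum>j\<in>UNIV. lapl_coeff x j p * pd j f p)"
proof -
  have s: "sqrt (gdet x p) > 0" using gdet_pos[OF p] by simp
  have flux: "pd i (\<lambda>q. sqrt (gdet x q) * (\<Sum>j\<in>UNIV. ginv x i j q * pd j f q)) p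
     = pd i (\<lambda>q. sqrt (gdet x q)) p * (\<Sum>j\<in>UNIV. ginv x i j p * pd j f p)
       + sqrt (gdet x p) * (\<Sum>j\<in>UNIV. pd i (ginv x i j) p * pd j f p + ginv x i j p * pd i (pd j f) p)"
    for i
  proof -
    have "pd i (\<lambda>q. sqrt (gdet x q) * (\<Sum>j\<in>UNIV. ginv x i j q * pd j f q)) p
      = pd i (\<lambda>q. sqrt (gdet x q)) p * (\<Sum>j\<in>UNIV. ginv x i j p * pd j f p)
       + sqrt (gdet x p) * pd i (\<lambda>q. \<Sum>j\<in>UNIV. ginv x i j q * pd j f q) p"
      by (rule pd_mult[OF dsqrt_gdet[OF p]]) (simp add: dginv[OF p] df)
    also have "pd i (\<lambda>q. \<Sum>j\<in>UNIV. ginv x i j q * pd j f q) p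
        = (\<Sum>j\<in>UNIV. pd i (ginv x i j) p * pd j f p + ginv x i j p * pd i (pd j f) p)"
      by (simp add: pd_sum pd_mult dginv[OF p] df)
    finally show ?thesis .
  qed
  show ?thesis
    unfolding lapl_def flux lapl_coeff_def using lapl_coords_algebra[of "sqrt (gdet x p)"] s by simp
qed

lemma lapl_vec_coords:
  assumes p: "p \<in> U" and dF: "\<And>q. q \<in> U \<Longrightarrow> F differentiable at q"
    and dF1: "\<And>j. pd j F differentiable at p"
  shows "lapl_vec x F p = (\<Sum>i\<in>UNIV. \<Sum>j\<in>UNIV. ginv x i j p *\<^sub>R pd i (pd j F) p)
    + (\<Sum>j\<in>UNIV. lapl_coeff x j p *\<^sub>R pd j F p)"
proof (subst vec_eq_iff, intro allI)
  fix k
  let ?f = "\<lambda>q. F q $ k"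
  have comp: "pd j F q $ k = pd j ?f q" if "q \<in> U" for j q using pd_vec_nth dF that by metis
  have d: "pd j ?f differentiable at p" for j
    by (rule differentiable_transform_open[OF differentiable_vec_nth[OF dF1[of j], of k] open_U p])
      (simp add: comp)
  have second: "pd i (pd j ?f) p = pd i (pd j F) p $ k" for i j
  proof -
    have "pd i (pd j ?f) p = pd i (\<lambda>q. pd j F q $ k) p"
      by (rule pd_transform_open[OF d open_U p]) (simp add: comp)
    also have "\<dots> = pd i (pd j F) p $ k" by (rule pd_vec_nth[OF dF1])
    finally show ?thesis .
  qed
  have "lapl_vec x F p $ k = lapl x ?f p" by (simp add: lapl_vec_def)
  also have "\<dots> = (\<Sum>i\<in>UNIV. \<Sum>j\<in>UNIV. ginv x i j p * pd i (pd j ?f) p)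
      + (\<Sum>j\<in>UNIV. lapl_coeff x j p * pd j ?f p)"
    by (rule lapl_coords[OF p d])
  finally show "lapl_vec x F p $ k = ((\<Sum>i\<in>UNIV. \<Sum>j\<in>UNIV. ginv x i j p *\<^sub>R pd i (pd j F) p)
      + (\<Sum>j\<in>UNIV. lapl_coeff x j p *\<^sub>R pd j F p)) $ k"
    using comp[OF p] by (simp add: second)
qed

lemma pd_gmet: "p \<in> U \<Longrightarrow>
    pd k (gmet x a b) p = pd k (pd a x) p \<bullet> pd b x p + pd a x p \<bullet> pd k (pd b x) p"
  unfolding gmet_fun by (rule pd_inner[OF dx1 dx1])

lemma pd_gdet: "p \<in> U \<Longrightarrow> pd k (gdet x) p =
   pd k (gmet x False False) p * gmet x True True p + gmet x False False p * pd k (gmet x True True) p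
   - (pd k (gmet x False True) p * gmet x True False p + gmet x False True p * pd k (gmet x True False) p)"
  unfolding gdet_fun by (simp add: pd_diff pd_mult dgmet)

lemma pd_ginv: "p \<in> U \<Longrightarrow> pd k (ginv x i j) p = (dadj x k i j p * gdet x p - adj x i j p * pd k (gdet x) p)
    / (gdet x p)\<^sup>2"
proof -
  assume p: "p \<in> U"
  have n: "gdet x p \<noteq> 0" using gdet_pos[OF p] by simp
  have "pd k (\<lambda>q. 0 - gmet x i j q) p = pd k (\<lambda>q. 0) p - pd k (gmet x i j) p"
    by (rule pd_diff) (simp_all add: dgmet[OF p])
  then have neg: "pd k (\<lambda>q. - gmet x i j q) p = - pd k (gmet x i j) p" by (simp add: pd_const)
  show ?thesis
  proof (cases "i = j")
    case True
    then show ?thesis unfolding ginv_fun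
      by (simp add: pd_divide dgmet[OF p] dgdet[OF p] n adj_def dadj_def)
  next
    case False
    have eq: "ginv x i j = (\<lambda>q. (\<lambda>q. - gmet x i j q) q / gdet x q)"
      by (rule ext) (simp add: ginv_def False)
    have dn: "(\<lambda>q. - gmet x i j q) differentiable at p" by (simp add: dgmet[OF p])
    show ?thesis unfolding eq pd_divide[OF dn dgdet[OF p] n] neg using False
      by (simp add: adj_def dadj_def)
  qed
qed

lemma pd_ginv_contracted:
  assumes p: "p \<in> U"
  shows "pd m (ginv x i j) p
    = - (\<Sum>a\<in>UNIV. \<Sum>b\<in>UNIV. ginv x i a p * pd m (gmet x a b) p * ginv x b j p)"
proof -
  have n: "gdet x p \<noteq> 0" using gdet_pos[OF p] by simp
  have gs: "gmet x True False p = gmet x False True p" by (rule gmet_sym)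
  have ps: "pd m (gmet x True False) p = pd m (gmet x False True) p"
    unfolding pd_gmet[OF p] by (simp add: inner_commute)
  have "(gdet x p)\<^sup>2 * pd m (ginv x i j) p = (gdet x p)\<^sup>2
      * (- (\<Sum>a\<in>UNIV. \<Sum>b\<in>UNIV. ginv x i a p * pd m (gmet x a b) p * ginv x b j p))"
    unfolding pd_ginv[OF p] ginv_adj using n
    by (simp add: UNIV_bool field_simps power2_eq_square pd_gdet[OF p] adj_def dadj_def gs ps)
      (cases i; cases j; simp add: gdet_eq algebra_simps)
  moreover have "(gdet x p)\<^sup>2 \<noteq> 0" using n by simp
  ultimately show ?thesis by (rule mult_left_cancel[THEN iffD1, rotated])
qed

text \<open>The coefficients \<open>C\<^sup>j\<close> are contracted Christoffel symbols,
  \<open>C\<^sup>j = - g\<^sup>k\<^sup>l g\<^sup>j\<^sup>m \<Gamma>\<^sub>k\<^sub>l\<^sub>m\<close>.  The computation multiplies by \<open>2 (det g)\<^sup>2\<close> to clear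
  all denominators.\<close>
lemma lapl_coeff_cleared:
  assumes p: "p \<in> U"
  shows "2 * (gdet x p)\<^sup>2 * lapl_coeff x j p
    = (\<Sum>i\<in>UNIV. 2 * gdet x p * dadj x i i j p - adj x i j p * pd i (gdet x) p)"
proof -
  have n: "gdet x p \<noteq> 0" using gdet_pos[OF p] by simp
  have s: "sqrt (gdet x p) * sqrt (gdet x p) = gdet x p" using gdet_pos[OF p] by simp
  have sq: "pd i (\<lambda>q. sqrt (gdet x q)) p / sqrt (gdet x p) = pd i (gdet x) p / (2 * gdet x p)" for i
    using pd_sqrt[OF dgdet[OF p] gdet_pos[OF p], of i] s by (simp add: mult.assoc)
  have "2 * (gdet x p)\<^sup>2 * (pd i (gdet x) p / (2 * gdet x p) * ginv x i j p + pd i (ginv x i j) p)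
        = 2 * gdet x p * dadj x i i j p - adj x i j p * pd i (gdet x) p" for i
    unfolding pd_ginv[OF p] ginv_adj using n by (simp add: field_simps power2_eq_square)
  then show ?thesis unfolding lapl_coeff_def sq by (simp add: sum_distrib_left)
qed

lemma lapl_coeff_cleared_christoffel:
  assumes p: "p \<in> U"
  shows "(\<Sum>i\<in>UNIV. 2 * gdet x p * dadj x i i j p - adj x i j p * pd i (gdet x) p)
     = - 2 * (\<Sum>k\<in>UNIV. \<Sum>l\<in>UNIV. \<Sum>m\<in>UNIV. adj x k l p * adj x j m p * christoffel x k l m p)"
  unfolding pd_gdet[OF p] dadj_def adj_def christoffel_def gdet_eq
  by (cases j) (simp_all add: UNIV_bool pd_gmet[OF p] pd_x_commute[OF p, of True False]
      inner_pd_pd2 gmet_sym[of x True False] algebra_simps)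

lemma lapl_coeff_christoffel:
  assumes p: "p \<in> U"
  shows "lapl_coeff x j p
    = - (\<Sum>k\<in>UNIV. \<Sum>l\<in>UNIV. \<Sum>m\<in>UNIV. ginv x k l p * ginv x j m p * christoffel x k l m p)"
proof -
  have n: "gdet x p \<noteq> 0" using gdet_pos[OF p] by simp
  have "2 * (gdet x p)\<^sup>2 * lapl_coeff x j p = 2 * (gdet x p)\<^sup>2
    * (- (\<Sum>k\<in>UNIV. \<Sum>l\<in>UNIV. \<Sum>m\<in>UNIV. ginv x k l p * ginv x j m p * christoffel x k l m p))"
    unfolding lapl_coeff_cleared[OF p] lapl_coeff_cleared_christoffel[OF p] ginv_adj using n
    by (simp add: UNIV_bool field_simps power2_eq_square)
  moreover have "2 * (gdet x p)\<^sup>2 \<noteq> 0" using n by simp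
  ultimately show ?thesis by (rule mult_left_cancel[THEN iffD1, rotated])
qed

end

section \<open>The Laplacian of the position vector: \<open>\<Delta>x = 2HN\<close>\<close>

definition trace_sff :: "(real \<times> real \<Rightarrow> real^3) \<Rightarrow> (real \<times> real \<Rightarrow> real^3) \<Rightarrow> real \<times> real \<Rightarrow> real" where
  "trace_sff x N q = (\<Sum>i\<in>UNIV. \<Sum>j\<in>UNIV. ginv x i j q * sff x N i j q)"

context patch
begin

lemma lapl_x_coords:
  assumes p: "p \<in> U"
  shows "lapl_vec x x p = (\<Sum>i\<in>UNIV. \<Sum>j\<in>UNIV. ginv x i j p *\<^sub>R pd i (pd j x) p)
    + (\<Sum>j\<in>UNIV. lapl_coeff x j p *\<^sub>R pd j x p)"
  by (rule lapl_vec_coords[OF p dx dx1[OF p]])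

text \<open>The tangential components of \<open>\<Delta>x\<close> cancel: \<open>g\<^sup>i\<^sup>j \<Gamma>\<^sub>i\<^sub>j\<^sub>m + C\<^sup>j g\<^sub>j\<^sub>m = 0\<close>.\<close>
lemma lapl_x_tangential:
  assumes p: "p \<in> U"
  shows "lapl_vec x x p \<bullet> pd m x p = 0"
proof -
  have "(\<Sum>j\<in>UNIV. lapl_coeff x j p * (pd j x p \<bullet> pd m x p)) = - (\<Sum>k\<in>UNIV. \<Sum>l\<in>UNIV. \<Sum>m'\<in>UNIV.
      ginv x k l p * christoffel x k l m' p * (\<Sum>j\<in>UNIV. ginv x m' j p * gmet x j m p))"
    unfolding lapl_coeff_christoffel[OF p]
    by (simp add: UNIV_bool inner_pd_pd ginv_sym[of x True False] algebra_simps)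
  also have "\<dots> = - (\<Sum>k\<in>UNIV. \<Sum>l\<in>UNIV. ginv x k l p * christoffel x k l m p)"
    unfolding ginv_gmet[OF p] by (cases m) (simp_all add: UNIV_bool)
  finally show ?thesis
    unfolding lapl_x_coords[OF p] by (simp add: inner_add_left inner_sum_left christoffel_def)
qed

lemma lapl_x_normal:
  assumes p: "p \<in> U"
  shows "lapl_vec x x p = trace_sff x N p *\<^sub>R N p"
proof -
  have xN: "pd i x p \<bullet> N p = 0" for i using normal_perp[OF p] by (simp add: inner_commute)
  have "lapl_vec x x p \<bullet> N p = trace_sff x N p"
    unfolding lapl_x_coords[OF p] trace_sff_def sff_def by (simp add: inner_add_left inner_sum_left xN)
  then show ?thesis
    using tangent_normal_decomp[OF p, of "lapl_vec x x p"] by (simp add: lapl_x_tangential[OF p])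
qed

lemma twice_mean_curv: "q \<in> U \<Longrightarrow> 2 * mean_curv x N q = trace_sff x N q"
  unfolding mean_curv_def using lapl_x_normal[of q] normal_unit[of q] by simp

section \<open>The Laplacian of the Gauss map: \<open>\<Delta>N = -|\<sigma>|\<^sup>2 N - grad 2H\<close>\<close>

lemma lapl_N_coords:
  assumes p: "p \<in> U"
  shows "lapl_vec x N p = (\<Sum>i\<in>UNIV. \<Sum>j\<in>UNIV. ginv x i j p *\<^sub>R pd i (pd j N) p)
    + (\<Sum>j\<in>UNIV. lapl_coeff x j p *\<^sub>R pd j N p)"
  by (rule lapl_vec_coords[OF p dN dN1[OF p]])

lemma lapl_N_normal_part:
  assumes p: "p \<in> U"
  shows "lapl_vec x N p \<bullet> N p = - sff_norm2 x N p"
proof -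
  have second: "pd i (pd j N) p \<bullet> N p = - (pd j N p \<bullet> pd i N p)" for i j
    using pd2_N_inner_N[OF p, of i j] by simp
  have "lapl_vec x N p \<bullet> N p = - (\<Sum>i\<in>UNIV. \<Sum>j\<in>UNIV. ginv x i j p * (pd j N p \<bullet> pd i N p))"
    unfolding lapl_N_coords[OF p]
    by (simp add: inner_add_left inner_sum_left second pd_N_perp_N[OF p] sum_negf)
  also have "\<dots> = - sff_norm2 x N p"
    unfolding inner_pd_N[OF p] sff_norm2_def
    by (simp add: UNIV_bool sff_sym[OF p, of True False] ginv_sym[of x True False] algebra_simps)
  finally show ?thesis .
qed

lemma dtrace_sff: "p \<in> U \<Longrightarrow> trace_sff x N differentiable at p"
  unfolding trace_sff_def[abs_def] by (simp add: dginv dsff)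

lemma pd_trace_sff:
  assumes p: "p \<in> U"
  shows "pd m (trace_sff x N) p = (\<Sum>i\<in>UNIV. \<Sum>j\<in>UNIV.
    pd m (ginv x i j) p * sff x N i j p + ginv x i j p * pd m (sff x N i j) p)"
  unfolding trace_sff_def[abs_def]
  by (simp add: pd_sum pd_mult dginv[OF p] dsff[OF p])

lemma pd_sff: "p \<in> U \<Longrightarrow>
    pd m (sff x N i j) p = pd m (pd i (pd j x)) p \<bullet> N p + pd i (pd j x) p \<bullet> pd m N p"
  unfolding sff_fun by (rule pd_inner[OF dx2 dN])

text \<open>The tangential part of \<Delta>N is minus the gradient of 2H.  Besides the Weingarten
  equations this uses the symmetry of the third derivatives of x (the Codazzi equations).\<close>
lemma lapl_N_tangential_part:
  assumes p: "p \<in> U"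
  shows "lapl_vec x N p \<bullet> pd m x p = - pd m (trace_sff x N) p"
proof -
  have second: "pd i (pd j N) p \<bullet> pd m x p = - (pd j N p \<bullet> pd i (pd m x) p)
      - (pd i N p \<bullet> pd j (pd m x) p) - N p \<bullet> pd i (pd j (pd m x)) p" for i j
    using pd2_N_inner_x[OF p, of i j m] by simp
  have first: "pd j N p \<bullet> pd m x p = - sff x N j m p" for j
    using pd_N_inner_x[OF p, of j m] by (simp add: sff_def inner_commute)
  have hs: "sff x N True False p = sff x N False True p" using sff_sym[OF p] .
  have gis: "ginv x True False p = ginv x False True p" by (rule ginv_sym)
  have s2: "pd True (pd False x) p = pd False (pd True x) p" using pd_x_commute[OF p] .
  have Gs: "christoffel x True False k p = christoffel x False True k p" for k
    by (simp add: christoffel_def s2)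
  have t3: "pd i (pd j (pd m x)) p \<bullet> N p = N p \<bullet> pd i (pd j (pd m x)) p" for i j
    by (rule inner_commute)
  have "lapl_vec x N p \<bullet> pd m x p = (\<Sum>i\<in>UNIV. \<Sum>j\<in>UNIV. ginv x i j p *
      (- (pd j N p \<bullet> pd i (pd m x) p) - (pd i N p \<bullet> pd j (pd m x) p) - N p \<bullet> pd i (pd j (pd m x)) p))
     + (\<Sum>j\<in>UNIV. lapl_coeff x j p * (- sff x N j m p))"
    unfolding lapl_N_coords[OF p] by (simp add: inner_add_left inner_sum_left second first)
  also have "\<dots> = - pd m (trace_sff x N) p"
    unfolding pd_trace_sff[OF p] pd_ginv_contracted[OF p] pd_sff[OF p] pd3_x_commute[OF p]
      lapl_coeff_christoffel[OF p] weingarten[OF p] pd_gmet[OF p]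
    by (simp add: UNIV_bool inner_add_left inner_add_right inner_pd_pd2 christoffel_inner s2 hs gis t3)
      (cases m; simp add: inner_pd_pd2 christoffel_inner s2 hs gis Gs algebra_simps)
  finally show ?thesis .
qed

lemma lapl_N:
  assumes p: "p \<in> U"
  shows "lapl_vec x N p = (- sff_norm2 x N p) *\<^sub>R N p
    - (\<Sum>k\<in>UNIV. \<Sum>l\<in>UNIV. (ginv x k l p * pd k (trace_sff x N) p) *\<^sub>R pd l x p)"
  using tangent_normal_decomp[OF p, of "lapl_vec x N p"]
  by (simp add: lapl_N_normal_part[OF p] lapl_N_tangential_part[OF p] sum_negf)

end

section \<open>The Laplacian of \<open>x \<times> N\<close>\<close>

context patch
begin

text \<open>\<open>\<Delta>(x \<times> N) = \<Delta>x \<times> N + x \<times> \<Delta>N + g\<^sup>i\<^sup>j (x\<^sub>j \<times> N\<^sub>i + x\<^sub>i \<times> N\<^sub>j)\<close>; the first term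
  vanishes as \<open>\<Delta>x \<parallel> N\<close>, the last one by the Weingarten equations and the symmetry of
  \<open>h\<^sub>i\<^sub>j\<close> and \<open>g\<^sup>i\<^sup>j\<close>.\<close>
lemma lapl_x_cross_N:
  assumes p: "p \<in> U"
  shows "lapl_vec x (\<lambda>q. cross3 (x q) (N q)) p = cross3 (x p) (lapl_vec x N p)"
proof -
  let ?F = "\<lambda>q. cross3 (x q) (N q)"
  let ?G = "\<lambda>j q. cross3 (pd j x q) (N q) + cross3 (x q) (pd j N q)"
  have dF: "\<And>q. q \<in> U \<Longrightarrow> ?F differentiable at q" by (rule differentiable_cross3[OF dx dN])
  have pF: "\<And>q. q \<in> U \<Longrightarrow> pd j ?F q = ?G j q" for j by (rule pd_cross3[OF dx dN])
  have dG: "?G j differentiable at p" for j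
    by (intro differentiable_add differentiable_cross3 dx1[OF p] dN[OF p] dx[OF p] dN1[OF p])
  have dF1: "pd j ?F differentiable at p" for j
    by (rule differentiable_transform_open[OF dG open_U p]) (simp add: pF)
  have second: "pd i (pd j ?F) p = cross3 (pd i (pd j x) p) (N p) + cross3 (pd j x p) (pd i N p)
      + (cross3 (pd i x p) (pd j N p) + cross3 (x p) (pd i (pd j N) p))" for i j
  proof -
    have "pd i (pd j ?F) p = pd i (?G j) p"
      by (rule pd_transform_open[OF dF1 open_U p]) (simp add: pF)
    also have "\<dots> = pd i (\<lambda>q. cross3 (pd j x q) (N q)) p + pd i (\<lambda>q. cross3 (x q) (pd j N q)) p"
      by (rule pd_add) (intro differentiable_cross3 dx1[OF p] dN[OF p] dx[OF p] dN1[OF p])+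
    finally show ?thesis by (simp add: pd_cross3 dx1[OF p] dN[OF p] dx[OF p] dN1[OF p])
  qed
  let ?M = "\<Sum>i\<in>UNIV. \<Sum>j\<in>UNIV. ginv x i j p *\<^sub>R
    (cross3 (pd j x p) (pd i N p) + cross3 (pd i x p) (pd j N p))"
  have coords: "lapl_vec x ?F p = (\<Sum>i\<in>UNIV. \<Sum>j\<in>UNIV. ginv x i j p *\<^sub>R pd i (pd j ?F) p)
      + (\<Sum>j\<in>UNIV. lapl_coeff x j p *\<^sub>R pd j ?F p)"
    by (rule lapl_vec_coords[OF p dF dF1])
  have expand: "lapl_vec x ?F p = cross3 (lapl_vec x x p) (N p) + cross3 (x p) (lapl_vec x N p) + ?M"
    unfolding coords second pF[OF p] lapl_x_coords[OF p] lapl_N_coords[OF p]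
    by (simp add: UNIV_bool cross_add_left cross_add_right cross_mult_left cross_mult_right
        algebra_simps)
  have "cross3 (lapl_vec x x p) (N p) = 0"
    unfolding lapl_x_normal[OF p] by (simp add: cross_mult_left)
  moreover have "?M = 0"
    unfolding weingarten[OF p]
    by (simp add: UNIV_bool cross_add_left cross_add_right cross_mult_left cross_mult_right
        Cross3.right_diff_distrib Cross3.left_diff_distrib cross_skew[of "pd True x p"]
        sff_sym[OF p, of True False] ginv_sym[of x True False] algebra_simps)
  ultimately show ?thesis unfolding expand by simp
qed

end

section \<open>Surfaces with \<open>2H = a(x\<^sub>1\<^sup>2 + x\<^sub>2\<^sup>2) + b\<close>\<close>

lemma lapl_component: "lapl x (\<lambda>q. F q \<bullet> E k) p = lapl_vec x F p \<bullet> E k"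
  by (simp add: lapl_vec_def E_def inner_axis)

context patch
begin

lemma pd_inner_const: "p \<in> U \<Longrightarrow> pd k (\<lambda>q. x q \<bullet> c) p = pd k x p \<bullet> c"
  by (simp add: pd_inner[OF dx differentiable_const] pd_const)

lemma pd_trace_sff_hyp:
  assumes hyp: "\<forall>p\<in>U. 2 * mean_curv x N p = a * ((x p \<bullet> E 1)\<^sup>2 + (x p \<bullet> E 2)\<^sup>2) + b"
    and p: "p \<in> U"
  shows "pd k (trace_sff x N) p = 2 * a * ((x p \<bullet> E 1) * (pd k x p \<bullet> E 1) + (x p \<bullet> E 2) * (pd k x p \<bullet> E 2))"
proof -
  let ?f = "\<lambda>i q. x q \<bullet> E i"
  have df: "?f i differentiable at p" for i by (simp add: dx[OF p])
  have "pd k (trace_sff x N) p = pd k (\<lambda>q. a * (?f 1 q * ?f 1 q + ?f 2 q * ?f 2 q) + b) p"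
    by (rule pd_transform_open[OF dtrace_sff[OF p] open_U p])
      (use hyp twice_mean_curv in \<open>auto simp: power2_eq_square\<close>)
  also have "\<dots> = a * (pd k (\<lambda>q. ?f 1 q * ?f 1 q) p + pd k (\<lambda>q. ?f 2 q * ?f 2 q) p)"
    using df by (simp add: pd_add pd_cmult pd_const)
  also have "\<dots> = 2 * a * ((x p \<bullet> E 1) * (pd k x p \<bullet> E 1) + (x p \<bullet> E 2) * (pd k x p \<bullet> E 2))"
    using df by (simp add: pd_mult pd_inner_const[OF p] algebra_simps)
  finally show ?thesis .
qed

lemma lapl_N_hyp:
  assumes hyp: "\<forall>p\<in>U. 2 * mean_curv x N p = a * ((x p \<bullet> E 1)\<^sup>2 + (x p \<bullet> E 2)\<^sup>2) + b"
    and p: "p \<in> U"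
  defines "P \<equiv> (x p \<bullet> E 1) *\<^sub>R E 1 + (x p \<bullet> E 2) *\<^sub>R E 2"
  shows "lapl_vec x N p = (- sff_norm2 x N p) *\<^sub>R N p - (2 * a) *\<^sub>R (P - (P \<bullet> N p) *\<^sub>R N p)"
proof -
  have grad: "pd k (trace_sff x N) p = 2 * a * (P \<bullet> pd k x p)" for k
    unfolding pd_trace_sff_hyp[OF hyp p]
    by (simp add: P_def E_def inner_add_left inner_axis inner_axis' mult.commute)
  have tangential: "(\<Sum>k\<in>UNIV. \<Sum>l\<in>UNIV. (ginv x k l p * (P \<bullet> pd k x p)) *\<^sub>R pd l x p)
      = P - (P \<bullet> N p) *\<^sub>R N p"
    using tangent_normal_decomp[OF p, of P] by (simp add: algebra_simps)
  show ?thesis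
    unfolding lapl_N[OF p] grad tangential[symmetric]
    by (simp add: scaleR_sum_right mult_ac)
qed

text \<open>Third components: \<open>\<langle>P, E\<^sub>3\<rangle> = 0\<close>, \<open>(x \<times> P)\<^sub>3 = 0\<close> and \<open>\<langle>P, N\<rangle> = h - x\<^sub>3N\<^sub>3\<close>.\<close>
lemma jacobi_N3:
  assumes hyp: "\<forall>p\<in>U. 2 * mean_curv x N p = a * ((x p \<bullet> E 1)\<^sup>2 + (x p \<bullet> E 2)\<^sup>2) + b"
    and p: "p \<in> U"
  shows "lapl x (\<lambda>q. N q \<bullet> E 3) p
    + (sff_norm2 x N p - 2 * a * (support x N p - (x p \<bullet> E 3) * (N p \<bullet> E 3))) * (N p \<bullet> E 3) = 0"
  unfolding lapl_component lapl_N_hyp[OF hyp p]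
  by (simp add: E_def inner_axis inner_axis' support_def inner_vec_def sum_3 axis_def algebra_simps)

lemma jacobi_psi:
  assumes hyp: "\<forall>p\<in>U. 2 * mean_curv x N p = a * ((x p \<bullet> E 1)\<^sup>2 + (x p \<bullet> E 2)\<^sup>2) + b"
    and p: "p \<in> U"
  shows "lapl x (\<lambda>q. cross3 (x q) (N q) \<bullet> E 3) p
    + (sff_norm2 x N p - 2 * a * (support x N p - (x p \<bullet> E 3) * (N p \<bullet> E 3)))
      * (cross3 (x p) (N p) \<bullet> E 3) = 0"
  unfolding lapl_component lapl_x_cross_N[OF p] lapl_N_hyp[OF hyp p]
  by (simp add: E_def inner_axis inner_axis' support_def inner_vec_def sum_3 axis_def
      cross_components algebra_simps)

end

theorem mainTheorem3:
  fixes U :: "(real \<times> real) set" and x N :: "real \<times> real \<Rightarrow> real^3" and a b :: real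
  assumes "immersed_patch_with_gauss_map U x N"
    and "\<forall>p\<in>U. 2 * mean_curv x N p = a * ((x p \<bullet> E 1)\<^sup>2 + (x p \<bullet> E 2)\<^sup>2) + b"
  shows "\<forall>u \<in> {(\<lambda>q. N q \<bullet> E 3), (\<lambda>q. cross3 (x q) (N q) \<bullet> E 3)}. \<forall>p\<in>U.
           lapl x u p + (sff_norm2 x N p - 2 * a * (support x N p - (x p \<bullet> E 3) * (N p \<bullet> E 3))) * u p = 0"
proof -
  interpret patch U x N by (rule patch.intro) (rule assms(1))
  show ?thesis using jacobi_N3[OF assms(2)] jacobi_psi[OF assms(2)] by auto
qed

end
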